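(* Let $(D,s,t,k)$ be a reduced instance of Rooted $k$-Distinct Branchings, let $(\hat T,\{B_x\})$ be the $s$-rooted cut decomposition of $D$, and let $\hat P=x_1\dots x_\ell$ be a degenerate path of $\hat T$ such that there are no two arcs $x_iu,x_ju\in A^+\cap R_t$ with $i<j$ and the same head $u$. If $(D,s,t,k)$ is not a positive instance, then $|A^+\cap R_t|\le 2k+1$.
   Context: Digraphs are finite and without loops; paths are directed. An out-tree (in-tree) is an oriented tree with exactly one vertex of in-degree zero (out-degree zero), its root; an out-branching (in-branching) of $D$ is a spanning out-tree (in-tree). An instance $(D,s,t,k)$ of Rooted $k$-Distinct Branchings ($D$ a digraph, $s,t\in V(D)$, $k$ an integer) is positive if $D$ has an out-branching $T^+$ rooted at $s$ and an in-branching $T^-$ rooted at $t$ with $|A(T^+)\setminus A(T^-)|\ge k$. It is reduced if $D$ has an out-branching rooted at $s$, an in-branching rooted at $t$, and every arc of $D$ lies in some out-branching rooted at $s$ or in some in-branching rooted at $t$. $R_t$ is the set of arcs lying in no in-branching rooted at $t$. A vertex $v$ is bi-reachable from $r$ if there are two internally vertex-disjoint directed paths from $r$ to $v$. For a digraph $H$ with at least two vertices and $r\in V(H)$ such that every vertex of $H$ is reachable from $r$, the diblock $B_r$ of $r$ in $H$ is the set of all vertices bi-reachable from $r$, together with $r$ and all out-neighbours of $r$. For $x\in B_r\setminus\{r\}$ let $X_x$ be the set of vertices $v\notin B_r$ such that every directed $r$–$v$ path intersects $B_r$ for the last time in $x$; $x$ is a bottleneck of $B_r$ if $X_x\ne\emptyset$.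 The $r$-rooted cut decomposition $(\hat T,\{B_x\}_{x\in V(\hat T)})$ of $H$ is defined recursively: $\hat T$ is a rooted tree with root $r$; the set associated with the root is $B_r$; the children of $r$ are the bottlenecks of $B_r$; for each bottleneck $x$, the subtree rooted at $x$ with its sets is the $x$-rooted cut decomposition of $H[X_x\cup\{x\}]$. $B_x$ is degenerate if $x$ is an internal node of $\hat T$ and $|B_x|=2$. A path $x_1\dots x_\ell$ in $\hat T$ is degenerate if it is a subpath of a root-to-leaf path of $\hat T$ (with $x_{i+1}$ a child of $x_i$) and every $B_{x_i}$ is degenerate. For such a path $\hat P$, $A^+$ is the set of arcs $x_iu$ of $D$ with $x_i\in V(\hat P)$ and $u\notin V(\hat P)$, $u\in B_y$ for some proper ancestor $y$ of $x_1$ in $\hat T$. *)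

theory Defs
  imports Main
begin

type_synonym 'a dg = "'a set \<times> ('a \<times> 'a) set"

definition digraph :: "'a dg \<Rightarrow> bool" where
  "digraph H \<longleftrightarrow> finite (fst H) \<and> snd H \<subseteq> fst H \<times> fst H \<and> (\<forall>v. (v, v) \<notin> snd H)"

definition is_path :: "'a dg \<Rightarrow> 'a list \<Rightarrow> bool" where
  "is_path H p \<longleftrightarrow> p \<noteq> [] \<and> distinct p \<and> set p \<subseteq> fst H \<and>
     (\<forall>i. Suc i < length p \<longrightarrow> (p ! i, p ! Suc i) \<in> snd H)"

definition path_from_to :: "'a dg \<Rightarrow> 'a \<Rightarrow> 'a \<Rightarrow> 'a list \<Rightarrow> bool" where
  "path_from_to H u v p \<longleftrightarrow> is_path H p \<and> hd p = u \<and> last p = v"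

definition oriented_tree :: "'a set \<Rightarrow> ('a \<times> 'a) set \<Rightarrow> bool" where
  "oriented_tree V T \<longleftrightarrow> finite V \<and> V \<noteq> {} \<and> T \<subseteq> V \<times> V \<and>
     (\<forall>u v. (u, v) \<in> T \<longrightarrow> u \<noteq> v \<and> (v, u) \<notin> T) \<and>
     (\<forall>u\<in>V. \<forall>v\<in>V. (u, v) \<in> (T \<union> T\<inverse>)\<^sup>*) \<and>
     card T + 1 = card V"

definition indeg :: "('a \<times> 'a) set \<Rightarrow> 'a \<Rightarrow> nat" where
  "indeg T v = card {u. (u, v) \<in> T}"

definition outdeg :: "('a \<times> 'a) set \<Rightarrow> 'a \<Rightarrow> nat" where
  "outdeg T v = card {u. (v, u) \<in> T}"

definition out_tree :: "'a set \<Rightarrow> ('a \<times> 'a) set \<Rightarrow> 'a \<Rightarrow> bool" where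
  "out_tree V T r \<longleftrightarrow> oriented_tree V T \<and> {v \<in> V. indeg T v = 0} = {r}"

definition in_tree :: "'a set \<Rightarrow> ('a \<times> 'a) set \<Rightarrow> 'a \<Rightarrow> bool" where
  "in_tree V T r \<longleftrightarrow> oriented_tree V T \<and> {v \<in> V. outdeg T v = 0} = {r}"

definition out_branching :: "'a dg \<Rightarrow> 'a \<Rightarrow> ('a \<times> 'a) set \<Rightarrow> bool" where
  "out_branching D r T \<longleftrightarrow> T \<subseteq> snd D \<and> out_tree (fst D) T r"

definition in_branching :: "'a dg \<Rightarrow> 'a \<Rightarrow> ('a \<times> 'a) set \<Rightarrow> bool" where
  "in_branching D r T \<longleftrightarrow> T \<subseteq> snd D \<and> in_tree (fst D) T r"

definition positive_instance :: "'a dg \<Rightarrow> 'a \<Rightarrow> 'a \<Rightarrow> int \<Rightarrow> bool" where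
  "positive_instance D s t k \<longleftrightarrow>
     (\<exists>Tp Tm. out_branching D s Tp \<and> in_branching D t Tm \<and> int (card (Tp - Tm)) \<ge> k)"

definition reduced :: "'a dg \<Rightarrow> 'a \<Rightarrow> 'a \<Rightarrow> bool" where
  "reduced D s t \<longleftrightarrow> (\<exists>T. out_branching D s T) \<and> (\<exists>T. in_branching D t T) \<and>
     (\<forall>a\<in>snd D. (\<exists>T. out_branching D s T \<and> a \<in> T) \<or> (\<exists>T. in_branching D t T \<and> a \<in> T))"

definition Rt :: "'a dg \<Rightarrow> 'a \<Rightarrow> ('a \<times> 'a) set" where
  "Rt D t = {a \<in> snd D. \<not> (\<exists>T. in_branching D t T \<and> a \<in> T)}"

definition interior :: "'a list \<Rightarrow> 'a set" where
  "interior p = set (butlast (tl p))"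

definition bireachable :: "'a dg \<Rightarrow> 'a \<Rightarrow> 'a \<Rightarrow> bool" where
  "bireachable H r v \<longleftrightarrow> (\<exists>p q. path_from_to H r v p \<and> path_from_to H r v q \<and> p \<noteq> q \<and>
     interior p \<inter> interior q = {})"

definition diblock :: "'a dg \<Rightarrow> 'a \<Rightarrow> 'a set" where
  "diblock H r = {v. bireachable H r v} \<union> {r} \<union> {v. (r, v) \<in> snd H}"

text \<open>X_x: vertices outside B_r all of whose r-paths leave B_r for the last time at x.\<close>
definition Xset :: "'a dg \<Rightarrow> 'a \<Rightarrow> 'a \<Rightarrow> 'a set" where
  "Xset H r x = {v \<in> fst H. v \<notin> diblock H r \<and> (\<exists>p. path_from_to H r v p) \<and>
     (\<forall>p. path_from_to H r v p \<longrightarrow> last (filter (\<lambda>w. w \<in> diblock H r) p) = x)}"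

definition bottleneck :: "'a dg \<Rightarrow> 'a \<Rightarrow> 'a \<Rightarrow> bool" where
  "bottleneck H r x \<longleftrightarrow> x \<in> diblock H r - {r} \<and> Xset H r x \<noteq> {}"

definition induced :: "'a dg \<Rightarrow> 'a set \<Rightarrow> 'a dg" where
  "induced H S = (S, snd H \<inter> (S \<times> S))"

text \<open>Nodes of the r-rooted cut decomposition of H: cd_node H r x Hx means that x is a
  node and the subtree rooted at x is the x-rooted cut decomposition of Hx
  (so B_x = diblock Hx x).\<close>
inductive cd_node :: "'a dg \<Rightarrow> 'a \<Rightarrow> 'a \<Rightarrow> 'a dg \<Rightarrow> bool" for H r where
  root: "cd_node H r r H"
| child: "cd_node H r x Hx \<Longrightarrow> bottleneck Hx x y \<Longrightarrow>
          cd_node H r y (induced Hx (Xset Hx x y \<union> {y}))"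

definition cd_child :: "'a dg \<Rightarrow> 'a \<Rightarrow> 'a \<Rightarrow> 'a \<Rightarrow> bool" where
  "cd_child H r x y \<longleftrightarrow> (\<exists>Hx. cd_node H r x Hx \<and> bottleneck Hx x y)"

definition cd_bag :: "'a dg \<Rightarrow> 'a \<Rightarrow> 'a \<Rightarrow> 'a set" where
  "cd_bag H r x = {u. \<exists>Hx. cd_node H r x Hx \<and> u \<in> diblock Hx x}"

definition cd_degenerate :: "'a dg \<Rightarrow> 'a \<Rightarrow> 'a \<Rightarrow> bool" where
  "cd_degenerate H r x \<longleftrightarrow> (\<exists>y. cd_child H r x y) \<and> card (cd_bag H r x) = 2"

definition degenerate_path :: "'a dg \<Rightarrow> 'a \<Rightarrow> 'a list \<Rightarrow> bool" where
  "degenerate_path H r xs \<longleftrightarrow> xs \<noteq> [] \<and> (\<forall>x\<in>set xs. cd_degenerate H r x) \<and>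
     (\<forall>i. Suc i < length xs \<longrightarrow> cd_child H r (xs ! i) (xs ! Suc i))"

definition Aplus :: "'a dg \<Rightarrow> 'a \<Rightarrow> 'a list \<Rightarrow> ('a \<times> 'a) set" where
  "Aplus D s xs = {(x, u) \<in> snd D. x \<in> set xs \<and> u \<notin> set xs \<and>
     (\<exists>y. (y, hd xs) \<in> {(a, b). cd_child D s a b}\<^sup>+ \<and> u \<in> cd_bag D s y)}"

end

(*
  Let F be the arcs of A+ in R_t; their heads are pairwise distinct.  Each arc xu of F lies in an
  out-branching rooted at s (the instance is reduced), so some s-x path avoids u; as every s-x_i path
  passes through x_1, no head of F dominates x_1.  Walking down the cut decomposition from s to x_1,
  at every bottleneck x with child y there are two x-y paths with disjoint interiors, and we keep
  the one meeting fewer heads.  This yields a set W, reachable from s inside itself, that contains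
  at most half of the heads.  Adding the path x_1 ... x_l, whose consecutive nodes are joined by arcs
  because the path is degenerate, gives a set U that is still reachable from s inside itself.  An
  out-tree spanning U extends to an out-branching that uses every arc of F with head outside U.
  These at least |F|/2 arcs lie in no in-branching rooted at t, so |F| >= 2k + 2 would make the
  instance positive.
*)

theory Submission
  imports Defs "HOL-Library.Transitive_Closure_Table"
begin

section \<open>Paths\<close>

lemma is_path_take: "is_path H p \<Longrightarrow> 0 < n \<Longrightarrow> is_path H (take n p)"
  unfolding is_path_def by (auto dest: in_set_takeD)

lemma is_path_drop: "is_path H p \<Longrightarrow> n < length p \<Longrightarrow> is_path H (drop n p)"
  unfolding is_path_def by (auto dest: in_set_dropD simp: add.commute)

lemma path_from_to_split:
  assumes "path_from_to H a b (p1 @ c # p2)"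
  shows "path_from_to H a c (p1 @ [c])" and "path_from_to H c b (c # p2)"
proof -
  let ?p = "p1 @ c # p2"
  have "is_path H ?p" using assms unfolding path_from_to_def by simp
  then have "is_path H (take (Suc (length p1)) ?p)" "is_path H (drop (length p1) ?p)"
    using is_path_take[of H ?p "Suc (length p1)"] is_path_drop[of H ?p "length p1"] by simp_all
  then have "is_path H (p1 @ [c])" "is_path H (c # p2)" by simp_all
  then show "path_from_to H a c (p1 @ [c])" "path_from_to H c b (c # p2)"
    using assms unfolding path_from_to_def by (auto simp: hd_append)
qed

lemma path_from_to_hd_in: "path_from_to H a b p \<Longrightarrow> a \<in> set p"
  and path_from_to_last_in: "path_from_to H a b p \<Longrightarrow> b \<in> set p"
  and path_from_to_subset: "path_from_to H a b p \<Longrightarrow> set p \<subseteq> fst H"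
  unfolding path_from_to_def is_path_def by auto

lemma path_from_to_prefix:
  assumes "path_from_to H a b p" "c \<in> set p"
  obtains q where "path_from_to H a c q" "set q \<subseteq> set p"
proof -
  obtain p1 p2 where "p = p1 @ c # p2" using split_list[OF assms(2)] by blast
  then show thesis using that path_from_to_split(1) assms(1) by fastforce
qed

lemma path_from_to_mono:
  assumes "path_from_to H a b p" "set p \<subseteq> fst H'" "snd H \<inter> (set p \<times> set p) \<subseteq> snd H'"
  shows "path_from_to H' a b p"
  using assms unfolding path_from_to_def is_path_def by (auto simp: subset_iff)

lemma path_from_to_rtrancl:
  assumes p: "path_from_to H a b p" and S: "set p \<subseteq> S"
  shows "(a, b) \<in> (snd H \<inter> S \<times> S)\<^sup>*"
proof -
  have "(a, p ! i) \<in> (snd H \<inter> S \<times> S)\<^sup>*" if "i < length p" for i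
    using that
  proof (induction i)
    case 0
    then show ?case using p unfolding path_from_to_def by (simp add: hd_conv_nth)
  next
    case (Suc i)
    then have "(p ! i, p ! Suc i) \<in> snd H \<inter> S \<times> S"
      using p S nth_mem[of i p] nth_mem[of "Suc i" p] unfolding path_from_to_def is_path_def by auto
    with Suc show ?case by (meson Suc_lessD rtrancl_into_rtrancl)
  qed
  moreover have "p \<noteq> []" "last p = b" using p unfolding path_from_to_def is_path_def by auto
  ultimately show ?thesis by (metis last_conv_nth diff_less length_greater_0_conv zero_less_one)
qed

lemma rtrancl_imp_path_from_to:
  assumes "snd H \<subseteq> fst H \<times> fst H" "a \<in> fst H" "a \<in> S" "(a, b) \<in> (snd H \<inter> S \<times> S)\<^sup>*"
  obtains p where "path_from_to H a b p" "set p \<subseteq> S"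
proof -
  let ?R = "\<lambda>u v. (u, v) \<in> snd H \<inter> S \<times> S"
  obtain xs where "rtrancl_path ?R a xs b"
    using assms(4) rtranclp_eq_rtrancl_path[of ?R] by (auto simp: rtrancl_def)
  then obtain ys where ys: "rtrancl_path ?R a ys b" "distinct (a # ys)"
    by (rule rtrancl_path_distinct)
  have "y \<in> fst H \<inter> S" if "y \<in> set ys" for y
    using rtrancl_path_Range[OF ys(1) that] assms(1) by auto
  moreover have "((a # ys) ! i, (a # ys) ! Suc i) \<in> snd H" if "Suc i < length (a # ys)" for i
    using rtrancl_path_nth[OF ys(1), of i] that by simp
  moreover have "last (a # ys) = b"
    using ys(1) rtrancl_path_last[OF ys(1)] by (cases ys) (auto elim: rtrancl_path.cases)
  ultimately have "path_from_to H a b (a # ys)" "set (a # ys) \<subseteq> S"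
    using ys(2) assms(2,3) unfolding path_from_to_def is_path_def by auto
  then show thesis using that by blast
qed

definition reaches_within :: "'a dg \<Rightarrow> 'a \<Rightarrow> 'a set \<Rightarrow> bool" where
  "reaches_within D s W \<longleftrightarrow> (\<forall>w\<in>W. (s, w) \<in> (snd D \<inter> W \<times> W)\<^sup>*)"

lemma reaches_within_Un:
  assumes "reaches_within D s W" "reaches_within D x C" "x \<in> W"
  shows "reaches_within D s (W \<union> C)"
proof -
  have mono: "(snd D \<inter> A \<times> A)\<^sup>* \<subseteq> (snd D \<inter> (W \<union> C) \<times> (W \<union> C))\<^sup>*" if "A \<subseteq> W \<union> C" for A
    using that by (intro rtrancl_mono) blast
  have "(s, x) \<in> (snd D \<inter> (W \<union> C) \<times> (W \<union> C))\<^sup>*"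
    using assms(1,3) mono[of W] unfolding reaches_within_def by blast
  moreover have "(s, w) \<in> (snd D \<inter> (W \<union> C) \<times> (W \<union> C))\<^sup>*" if "w \<in> W" for w
    using assms(1) that mono[of W] unfolding reaches_within_def by blast
  moreover have "(x, w) \<in> (snd D \<inter> (W \<union> C) \<times> (W \<union> C))\<^sup>*" if "w \<in> C" for w
    using assms(2) that mono[of C] unfolding reaches_within_def by blast
  ultimately show ?thesis unfolding reaches_within_def by (meson UnE rtrancl_trans)
qed

lemma path_reaches_within:
  assumes "path_from_to D x b c"
  shows "reaches_within D x (set c)"
  unfolding reaches_within_def
proof
  fix w assume "w \<in> set c"
  then obtain q where "path_from_to D x w q" "set q \<subseteq> set c"
    using path_from_to_prefix[OF assms] by blast
  then show "(x, w) \<in> (snd D \<inter> set c \<times> set c)\<^sup>*" by (rule path_from_to_rtrancl)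
qed

lemma arc_chain_reaches_within:
  assumes "xs \<noteq> []" "\<forall>i. Suc i < length xs \<longrightarrow> (xs ! i, xs ! Suc i) \<in> snd D"
  shows "reaches_within D (hd xs) (set xs)"
proof -
  have "(hd xs, xs ! i) \<in> (snd D \<inter> set xs \<times> set xs)\<^sup>*" if "i < length xs" for i
    using that
  proof (induction i)
    case 0
    then show ?case using assms(1) by (simp add: hd_conv_nth)
  next
    case (Suc i)
    then have "(xs ! i, xs ! Suc i) \<in> snd D \<inter> set xs \<times> set xs" using assms(2) by simp
    with Suc show ?case by (meson Suc_lessD rtrancl_into_rtrancl)
  qed
  then show ?thesis unfolding reaches_within_def by (metis in_set_conv_nth)
qed

section \<open>Arborescences\<close>

definition arborescence :: "'a set \<Rightarrow> 'a \<Rightarrow> ('a \<times> 'a) set \<Rightarrow> bool" where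
  "arborescence V r T \<longleftrightarrow> T \<subseteq> V \<times> V \<and> r \<in> V \<and> (\<forall>a. (a, r) \<notin> T) \<and>
     (\<forall>v\<in>V - {r}. \<exists>a. (a, v) \<in> T) \<and> (\<forall>a b v. (a, v) \<in> T \<longrightarrow> (b, v) \<in> T \<longrightarrow> a = b) \<and>
     (\<forall>v\<in>V. (r, v) \<in> T\<^sup>*)"

lemma arborescenceD:
  assumes "arborescence V r T"
  shows "T \<subseteq> V \<times> V" "r \<in> V" "(a, r) \<notin> T" "v \<in> V - {r} \<Longrightarrow> \<exists>a. (a, v) \<in> T"
    "(a, v) \<in> T \<Longrightarrow> (b, v) \<in> T \<Longrightarrow> a = b" "v \<in> V \<Longrightarrow> (r, v) \<in> T\<^sup>*"
  using assms unfolding arborescence_def by blast+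

lemma arborescence_acyclic:
  assumes "arborescence V r T"
  shows "(w, w) \<notin> T\<^sup>+"
proof
  assume cyc: "(w, w) \<in> T\<^sup>+"
  then have "w \<in> V" using arborescenceD(1)[OF assms] by (auto dest: tranclD)
  then have "(r, w) \<in> T\<^sup>*" by (rule arborescenceD(6)[OF assms])
  from this cyc show False
  proof (induction rule: rtrancl_induct)
    case base
    then obtain q where "(q, r) \<in> T" by (meson tranclE)
    then show False using arborescenceD(3)[OF assms] by blast
  next
    case (step y z)
    obtain q where q: "(z, q) \<in> T\<^sup>*" "(q, z) \<in> T" using step.prems by (meson tranclD2)
    then have "q = y" using arborescenceD(5)[OF assms] step.hyps(2) by blast
    then show False using q step by (meson rtrancl_into_trancl2)
  qed
qed

lemma arborescence_imp_out_tree: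
  assumes fin: "finite V" and T: "arborescence V r T"
  shows "out_tree V T r"
proof -
  note A = arborescenceD[OF T]
  have antisym: "u \<noteq> v \<and> (v, u) \<notin> T" if "(u, v) \<in> T" for u v
    using that arborescence_acyclic[OF T, of u] by (metis r_into_trancl' trancl_into_trancl)
  have root_conn: "(r, v) \<in> (T \<union> T\<inverse>)\<^sup>*" if "v \<in> V" for v
    using A(6)[OF that] rtrancl_mono[of T "T \<union> T\<inverse>"] by blast
  have conn: "(u, v) \<in> (T \<union> T\<inverse>)\<^sup>*" if "u \<in> V" "v \<in> V" for u v
  proof -
    have "(u, r) \<in> ((T \<union> T\<inverse>)\<inverse>)\<^sup>*" using that root_conn by (simp add: rtrancl_converse)
    then have "(u, r) \<in> (T \<union> T\<inverse>)\<^sup>*" by (simp add: converse_Un sup_commute)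
    then show ?thesis using that root_conn by (meson rtrancl_trans)
  qed
  have "inj_on snd T" using A(5) by (auto simp: inj_on_def)
  moreover have "snd ` T = V - {r}" using A(1,3,4) by force
  ultimately have "card T = card V - 1" using fin A(2) by (simp add: card_image[symmetric])
  moreover have "card V > 0" using fin A(2) card_gt_0_iff by blast
  ultimately have "card T + 1 = card V" by linarith
  moreover have "V \<noteq> {}" using A(2) by blast
  ultimately have tree: "oriented_tree V T"
    unfolding oriented_tree_def using fin A(1) antisym conn by simp
  have "indeg T v \<noteq> 0" if v: "v \<in> V - {r}" for v
  proof -
    obtain a where "(a, v) \<in> T" using A(4)[OF v] by blast
    moreover have "finite {u. (u, v) \<in> T}"
      by (rule finite_subset[OF _ fin]) (use A(1) in blast)
    ultimately show ?thesis unfolding indeg_def by auto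
  qed
  moreover have "indeg T r = 0" using A(3) unfolding indeg_def by simp
  ultimately have "{v \<in> V. indeg T v = 0} = {r}" using A(2) by blast
  with tree show ?thesis unfolding out_tree_def by blast
qed

lemma card_eq_sum_indeg:
  assumes "finite V" "T \<subseteq> V \<times> V"
  shows "card T = (\<Sum>v\<in>V. indeg T v)"
proof -
  have "T = (\<Union>v\<in>V. {a \<in> T. snd a = v})" using assms(2) by auto
  moreover have "finite T" using finite_subset[OF assms(2)] assms(1) by blast
  ultimately have "card T = (\<Sum>v\<in>V. card {a \<in> T. snd a = v})"
    using card_UN_disjoint[of V "\<lambda>v. {a \<in> T. snd a = v}"] assms(1) by auto
  also have "\<dots> = (\<Sum>v\<in>V. indeg T v)"
  proof (rule sum.cong)
    fix v
    have "bij_betw fst {a \<in> T. snd a = v} {u. (u, v) \<in> T}"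
      unfolding bij_betw_def inj_on_def by force
    then show "card {a \<in> T. snd a = v} = indeg T v" unfolding indeg_def by (rule bij_betw_same_card)
  qed simp
  finally show ?thesis .
qed

lemma out_tree_indeg:
  assumes "out_tree V T r"
  shows "indeg T r = 0" "v \<in> V - {r} \<Longrightarrow> indeg T v = 1"
proof -
  have roots: "{v \<in> V. indeg T v = 0} = {r}" using assms unfolding out_tree_def by simp
  have fin: "finite V" and TV: "T \<subseteq> V \<times> V" and cT: "card T + 1 = card V"
    using assms unfolding out_tree_def oriented_tree_def by blast+
  have rV: "r \<in> V" using roots by blast
  show root_indeg: "indeg T r = 0" using roots by blast
  have indeg_pos: "indeg T v \<ge> 1" if "v \<in> V - {r}" for v
  proof -
    have "v \<notin> {v \<in> V. indeg T v = 0}" using roots that by blast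
    then show ?thesis using that by simp
  qed
  have "(\<Sum>v\<in>V - {r}. indeg T v) = card T"
    using card_eq_sum_indeg[OF fin TV] root_indeg rV fin by (simp add: sum.remove)
  also have "\<dots> = (\<Sum>v\<in>V - {r}. 1)" using cT rV fin by simp
  finally show "indeg T v = 1" if "v \<in> V - {r}"
    using sum_mono_inv[of "\<lambda>_. 1" "V - {r}" "indeg T" v] indeg_pos that fin by auto
qed

lemma out_tree_imp_arborescence:
  assumes "out_tree V T r"
  shows "arborescence V r T"
proof -
  have fin: "finite V" and TV: "T \<subseteq> V \<times> V"
    and conn: "\<forall>u\<in>V. \<forall>v\<in>V. (u, v) \<in> (T \<union> T\<inverse>)\<^sup>*" and rV: "r \<in> V"
    using assms unfolding out_tree_def oriented_tree_def by blast+
  have fin_in: "finite {u. (u, v) \<in> T}" for v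
    by (rule finite_subset[OF _ fin]) (use TV in blast)
  have no_parent: "(a, r) \<notin> T" for a
    using out_tree_indeg(1)[OF assms] fin_in[of r] unfolding indeg_def by auto
  have one_parent: "\<exists>!a. (a, v) \<in> T" if v: "v \<in> V - {r}" for v
  proof -
    obtain a where "{u. (u, v) \<in> T} = {a}"
      using out_tree_indeg(2)[OF assms v] unfolding indeg_def by (metis card_1_singletonE)
    then show ?thesis by (metis mem_Collect_eq singleton_iff)
  qed
  have unique: "a = b" if "(a, v) \<in> T" "(b, v) \<in> T" for a b v
    using that one_parent[of v] TV no_parent by blast
  have reach: "(r, v) \<in> T\<^sup>*" if "v \<in> V" for v
  proof -
    have "(r, v) \<in> (T \<union> T\<inverse>)\<^sup>*" using conn rV that by blast
    then show ?thesis
    proof (induction rule: rtrancl_induct)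
      case (step y z)
      show ?case
      proof (cases "(y, z) \<in> T")
        case True
        then show ?thesis using step.IH by simp
      next
        case False
        then have zy: "(z, y) \<in> T" using step.hyps(2) by blast
        then have "y \<noteq> r" using no_parent by blast
        then obtain q where "(r, q) \<in> T\<^sup>*" "(q, y) \<in> T"
          using step.IH by (auto elim: rtranclE)
        then show ?thesis using unique zy by blast
      qed
    qed simp
  qed
  show ?thesis
    unfolding arborescence_def using TV rV no_parent one_parent unique reach by (intro conjI) blast+
qed

lemma out_branching_iff_arborescence:
  assumes "digraph D"
  shows "out_branching D s T \<longleftrightarrow> T \<subseteq> snd D \<and> arborescence (fst D) s T"
proof -
  have "finite (fst D)" using assms unfolding digraph_def by simp
  then show ?thesis
    unfolding out_branching_def using arborescence_imp_out_tree out_tree_imp_arborescence by metis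
qed

lemma arborescence_add_arcs:
  assumes T: "arborescence U r T" and S: "\<forall>(a, b)\<in>S. a \<in> U \<and> b \<notin> U" and inj: "inj_on snd S"
  shows "arborescence (U \<union> snd ` S) r (T \<union> S)"
proof -
  note A = arborescenceD[OF T]
  have parent: "\<exists>a. (a, v) \<in> T \<union> S" if v: "v \<in> U \<union> snd ` S - {r}" for v
  proof (cases "v \<in> U")
    case True
    then show ?thesis using A(4) v by blast
  next
    case False
    then obtain f where "f \<in> S" "v = snd f" using v by blast
    then show ?thesis by (metis UnI2 prod.collapse)
  qed
  have unique: "a = b" if "(a, v) \<in> T \<union> S" "(b, v) \<in> T \<union> S" for a b v
  proof (cases "v \<in> U")
    case True
    then have "(a, v) \<in> T" "(b, v) \<in> T" using that S by auto
    then show ?thesis by (rule A(5))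
  next
    case False
    then have "(a, v) \<in> S" "(b, v) \<in> S" using that A(1) by auto
    then show ?thesis using inj unfolding inj_on_def by fastforce
  qed
  have reach: "(r, v) \<in> (T \<union> S)\<^sup>*" if v: "v \<in> U \<union> snd ` S" for v
  proof -
    have U_reach: "(r, w) \<in> (T \<union> S)\<^sup>*" if "w \<in> U" for w
      using A(6)[OF that] rtrancl_mono[of T "T \<union> S"] by blast
    show ?thesis
    proof (cases "v \<in> U")
      case False
      then obtain a where "(a, v) \<in> S" using v by force
      then show ?thesis using U_reach S by (blast intro: rtrancl_into_rtrancl)
    qed (rule U_reach)
  qed
  have "T \<union> S \<subseteq> (U \<union> snd ` S) \<times> (U \<union> snd ` S)"
    using A(1) S by (auto intro: rev_image_eqI)
  moreover have "(a, r) \<notin> T \<union> S" for a using A(2,3) S by blast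
  ultimately show ?thesis
    unfolding arborescence_def using A(2) parent unique reach by blast
qed

lemma rtrancl_exit_arc:
  assumes "(a, b) \<in> E\<^sup>*" "a \<in> U" "b \<notin> U"
  obtains x y where "(x, y) \<in> E" "x \<in> U" "y \<notin> U"
  using assms by (induction rule: rtrancl_induct) auto

lemma arborescence_extend:
  assumes fin: "finite V" and E: "E \<subseteq> V \<times> V" and reach: "\<forall>v\<in>V. (r, v) \<in> E\<^sup>*"
    and "U \<subseteq> V" and "arborescence U r T0" and "T0 \<subseteq> E"
  obtains T where "arborescence V r T" "T \<subseteq> E" "T0 \<subseteq> T"
  using assms(4-6)
proof (induction "card (V - U)" arbitrary: U T0 rule: less_induct)
  case less
  show ?case
  proof (cases "U = V")
    case True
    then show ?thesis using less.prems by blast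
  next
    case False
    then obtain w where w: "w \<in> V" "w \<notin> U" using less.prems(2) by blast
    have "r \<in> U" using arborescenceD(2)[OF less.prems(3)] .
    then obtain a b where ab: "(a, b) \<in> E" "a \<in> U" "b \<notin> U"
      using rtrancl_exit_arc reach w by metis
    have "arborescence (U \<union> snd ` {(a, b)}) r (T0 \<union> {(a, b)})"
      using ab(2,3) by (intro arborescence_add_arcs[OF less.prems(3)]) auto
    then have T1: "arborescence (insert b U) r (insert (a, b) T0)" by simp
    have "b \<in> V - U" using ab E by blast
    then have smaller: "card (V - insert b U) < card (V - U)"
      using fin by (metis Diff_insert card_Diff1_less finite_Diff)
    have "insert b U \<subseteq> V" "insert (a, b) T0 \<subseteq> E"
      using \<open>b \<in> V - U\<close> less.prems ab(1) by auto
    from less.hyps[OF smaller _ this(1) T1 this(2)] less.prems(1) show ?thesis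
      by (meson insert_subset)
  qed
qed

lemma out_branching_containing_arcs:
  assumes D: "digraph D" and s: "s \<in> U" "s \<in> fst D"
    and reach_D: "\<forall>v\<in>fst D. (s, v) \<in> (snd D)\<^sup>*" and reach_U: "reaches_within D s U"
    and S: "S \<subseteq> snd D" "\<forall>(a, b)\<in>S. a \<in> U \<and> b \<notin> U" "inj_on snd S"
  obtains T where "out_branching D s T" "S \<subseteq> T"
proof -
  have fin: "finite (fst D)" and arcs: "snd D \<subseteq> fst D \<times> fst D"
    using D unfolding digraph_def by auto
  have reach_U': "\<forall>w\<in>U. (s, w) \<in> (snd D \<inter> U \<times> U)\<^sup>*" using reach_U unfolding reaches_within_def .
  have U: "U \<subseteq> fst D"
  proof
    fix w assume "w \<in> U"
    with reach_U' have "(s, w) \<in> (snd D \<inter> U \<times> U)\<^sup>*" by blast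
    then show "w \<in> fst D" using s(2) arcs by (induction rule: rtrancl_induct) auto
  qed
  have "arborescence {s} s {}" unfolding arborescence_def by simp
  then obtain T0 where T0: "arborescence U s T0" "T0 \<subseteq> snd D \<inter> U \<times> U"
    using arborescence_extend[OF finite_subset[OF U fin] _ reach_U'] s(1) by blast
  have "arborescence (U \<union> snd ` S) s (T0 \<union> S)"
    by (rule arborescence_add_arcs[OF T0(1) S(2,3)])
  moreover have "U \<union> snd ` S \<subseteq> fst D" "T0 \<union> S \<subseteq> snd D" using U S(1) arcs T0(2) by auto
  ultimately obtain T where "arborescence (fst D) s T" "T \<subseteq> snd D" "T0 \<union> S \<subseteq> T"
    using arborescence_extend[OF fin arcs reach_D] by metis
  then show thesis using that out_branching_iff_arborescence[OF D] by blast
qed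

lemma rtrancl_within_ancestors:
  assumes "(a, b) \<in> E\<^sup>*"
  shows "(a, b) \<in> (E \<inter> {w. (w, b) \<in> E\<^sup>*} \<times> {w. (w, b) \<in> E\<^sup>*})\<^sup>*"
  using assms
proof (induction rule: converse_rtrancl_induct)
  case (step y z)
  then have "(y, z) \<in> E \<inter> {w. (w, b) \<in> E\<^sup>*} \<times> {w. (w, b) \<in> E\<^sup>*}"
    by (auto intro: converse_rtrancl_into_rtrancl)
  then show ?case using step.IH by (rule converse_rtrancl_into_rtrancl)
qed simp

lemma out_branching_path_avoiding_child:
  assumes D: "digraph D" and T: "out_branching D s T" and xu: "(x, u) \<in> T"
  obtains p where "path_from_to D s x p" "u \<notin> set p"
proof -
  have A: "arborescence (fst D) s T" and TD: "T \<subseteq> snd D"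
    using T out_branching_iff_arborescence[OF D] by auto
  let ?Anc = "{w. (w, x) \<in> T\<^sup>*}"
  have "x \<in> fst D" using arborescenceD(1)[OF A] xu by blast
  then have "(s, x) \<in> (T \<inter> ?Anc \<times> ?Anc)\<^sup>*"
    by (intro rtrancl_within_ancestors arborescenceD(6)[OF A])
  then have "(s, x) \<in> (snd D \<inter> ?Anc \<times> ?Anc)\<^sup>*"
    using rtrancl_mono[of "T \<inter> ?Anc \<times> ?Anc" "snd D \<inter> ?Anc \<times> ?Anc"] TD by blast
  moreover have "s \<in> ?Anc" "s \<in> fst D" using arborescenceD(2,6)[OF A] \<open>x \<in> fst D\<close> by auto
  moreover have "snd D \<subseteq> fst D \<times> fst D" using D unfolding digraph_def by simp
  ultimately obtain p where p: "path_from_to D s x p" "set p \<subseteq> ?Anc"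
    using rtrancl_imp_path_from_to by metis
  have "u \<notin> ?Anc"
    using arborescence_acyclic[OF A, of u] xu by (auto intro: rtrancl_into_trancl1)
  then show thesis using that p by blast
qed

lemma reduced_root_reaches:
  assumes D: "digraph D" and red: "reduced D s t"
  shows "s \<in> fst D" "\<forall>v\<in>fst D. (s, v) \<in> (snd D)\<^sup>*"
proof -
  obtain T where "out_branching D s T" using red unfolding reduced_def by blast
  then have T: "T \<subseteq> snd D" "arborescence (fst D) s T"
    using out_branching_iff_arborescence[OF D] by simp_all
  show "s \<in> fst D" by (rule arborescenceD(2)[OF T(2)])
  show "\<forall>v\<in>fst D. (s, v) \<in> (snd D)\<^sup>*"
    using arborescenceD(6)[OF T(2)] rtrancl_mono[OF T(1)] by blast
qed

section \<open>Diblocks and the cut decomposition\<close>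

lemma diblock_subset:
  assumes "snd H \<subseteq> fst H \<times> fst H" "r \<in> fst H"
  shows "diblock H r \<subseteq> fst H"
proof
  fix v assume "v \<in> diblock H r"
  then consider "bireachable H r v" | "v = r" | "(r, v) \<in> snd H" unfolding diblock_def by blast
  then show "v \<in> fst H"
  proof cases
    case 1
    then obtain p where "path_from_to H r v p" unfolding bireachable_def by blast
    then show ?thesis by (meson path_from_to_last_in path_from_to_subset subsetD)
  qed (use assms in auto)
qed

lemma path_from_to_interior:
  assumes "path_from_to H a b p"
  shows "set p - {a, b} \<subseteq> interior p"
proof (cases p)
  case (Cons c q)
  then have "c = a" using assms unfolding path_from_to_def by simp
  show ?thesis
  proof (cases "q = []")
    case False
    then have "last q = b" using Cons assms unfolding path_from_to_def by simp
    moreover have "set q = insert (last q) (set (butlast q))"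
      using False by (metis append_butlast_last_id list.simps(15) rotate1.simps(2) set_rotate1)
    ultimately show ?thesis using Cons \<open>c = a\<close> unfolding interior_def by auto
  qed (use Cons \<open>c = a\<close> in auto)
qed simp

lemma diblock_disjoint_paths:
  assumes "y \<in> diblock H r" "y \<noteq> r" "snd H \<subseteq> fst H \<times> fst H"
  obtains P Q where "path_from_to H r y P" "path_from_to H r y Q"
    "(set P - {r, y}) \<inter> (set Q - {r, y}) = {}"
proof -
  have "bireachable H r y \<or> (r, y) \<in> snd H" using assms(1,2) unfolding diblock_def by blast
  then show thesis
  proof
    assume "(r, y) \<in> snd H"
    then have "path_from_to H r y [r, y]"
      using assms(2,3) unfolding path_from_to_def is_path_def by auto
    then show thesis using that[of "[r, y]" "[r, y]"] by simp
  next
    assume "bireachable H r y"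
    then obtain P Q where "path_from_to H r y P" "path_from_to H r y Q" "interior P \<inter> interior Q = {}"
      unfolding bireachable_def by blast
    moreover from this(1,2) have "set P - {r, y} \<subseteq> interior P" "set Q - {r, y} \<subseteq> interior Q"
      by (simp_all add: path_from_to_interior)
    ultimately show thesis using that by blast
  qed
qed

lemma diblock_path_avoiding:
  assumes "y' \<in> diblock H r" "y \<noteq> r" "y \<noteq> y'" "snd H \<subseteq> fst H \<times> fst H" "r \<in> fst H"
  obtains P where "path_from_to H r y' P" "y \<notin> set P"
proof (cases "y' = r")
  case True
  have "path_from_to H r r [r]" using assms(5) unfolding path_from_to_def is_path_def by auto
  then show thesis using that True assms(2) by auto
next
  case False
  obtain P Q where "path_from_to H r y' P" "path_from_to H r y' Q"
    "(set P - {r, y'}) \<inter> (set Q - {r, y'}) = {}"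
    by (rule diblock_disjoint_paths[OF assms(1) False assms(4)])
  then have "y \<notin> set P \<or> y \<notin> set Q" using assms(2,3) by blast
  then show thesis using that \<open>path_from_to H r y' P\<close> \<open>path_from_to H r y' Q\<close> by blast
qed

lemma filter_last_split:
  assumes "filter P xs \<noteq> []" "last (filter P xs) = y"
  obtains ys zs where "xs = ys @ y # zs" "P y" "\<forall>z\<in>set zs. \<not> P z"
  using assms
proof (induction xs arbitrary: thesis rule: rev_induct)
  case (snoc x xs)
  show ?case
  proof (cases "P x")
    case True
    then show ?thesis using snoc.prems by (intro snoc.prems(1)[of xs "[]"]) auto
  next
    case False
    then have "filter P xs \<noteq> []" "last (filter P xs) = y" using snoc.prems(2,3) by auto
    then show ?thesis
    proof (rule snoc.IH[rotated])
      fix ys zs assume "xs = ys @ y # zs" "P y" "\<forall>z\<in>set zs. \<not> P z"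
      then show ?thesis using False by (intro snoc.prems(1)[of ys "zs @ [x]"]) auto
    qed
  qed
qed simp

lemma cd_node_induced:
  assumes D: "digraph D" and s: "s \<in> fst D" and node: "cd_node D s y Hy"
  shows "fst Hy \<subseteq> fst D" "snd Hy = snd D \<inter> fst Hy \<times> fst Hy" "y \<in> fst Hy"
proof -
  have "fst Hy \<subseteq> fst D \<and> snd Hy = snd D \<inter> fst Hy \<times> fst Hy \<and> y \<in> fst Hy"
    using node
  proof (induction rule: cd_node.induct)
    case root
    have "snd D \<subseteq> fst D \<times> fst D" using D unfolding digraph_def by simp
    then show ?case using s by (simp add: Int_absorb2)
  next
    case (child x Hx y)
    have "snd Hx \<subseteq> fst Hx \<times> fst Hx" "x \<in> fst Hx" using child.IH by auto
    then have "diblock Hx x \<subseteq> fst Hx" by (rule diblock_subset)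
    moreover have "y \<in> diblock Hx x" using child.hyps(2) unfolding bottleneck_def by blast
    ultimately have "y \<in> fst Hx" by blast
    moreover have "Xset Hx x y \<subseteq> fst Hx" unfolding Xset_def by blast
    ultimately show ?case using child.IH unfolding induced_def by (simp add: Int_absorb2 Int_assoc) blast
  qed
  then show "fst Hy \<subseteq> fst D" "snd Hy = snd D \<inter> fst Hy \<times> fst Hy" "y \<in> fst Hy" by simp_all
qed

lemma path_from_to_meets_diblock:
  assumes "path_from_to H x v q"
  shows "filter (\<lambda>w. w \<in> diblock H x) q \<noteq> []"
proof -
  have "x \<in> diblock H x" unfolding diblock_def by blast
  then show ?thesis using path_from_to_hd_in[OF assms] by (auto simp: filter_empty_conv)
qed

lemma Xset_path_through:
  assumes "v \<in> Xset H x y" "path_from_to H x v q"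
  shows "y \<in> set q"
proof -
  have "last (filter (\<lambda>w. w \<in> diblock H x) q) = y" using assms unfolding Xset_def by blast
  then show ?thesis using last_in_set[OF path_from_to_meets_diblock[OF assms(2)]] by simp
qed

lemma Xset_separated:
  assumes H: "snd H \<subseteq> fst H \<times> fst H" "x \<in> fst H" and "x \<noteq> y" and v: "v \<in> Xset H x y"
  shows "(x, v) \<notin> (snd H \<inter> (fst H - {y}) \<times> (fst H - {y}))\<^sup>*"
proof
  assume "(x, v) \<in> (snd H \<inter> (fst H - {y}) \<times> (fst H - {y}))\<^sup>*"
  moreover have "x \<in> fst H - {y}" using H(2) \<open>x \<noteq> y\<close> by blast
  ultimately obtain q where "path_from_to H x v q" "set q \<subseteq> fst H - {y}"
    using rtrancl_imp_path_from_to[OF H] by metis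
  then show False using Xset_path_through[OF v] by blast
qed

lemma last_diblock_vertex_before_Xset:
  assumes H: "snd H \<subseteq> fst H \<times> fst H" "x \<in> fst H" and y: "y \<in> diblock H x" "y \<noteq> x"
    and v: "v \<in> Xset H x y" and wv: "(w, v) \<in> (snd H \<inter> (fst H - {y}) \<times> (fst H - {y}))\<^sup>*"
    and r: "path_from_to H x w r"
  shows "last (filter (\<lambda>u. u \<in> diblock H x) r) = y"
proof (rule ccontr)
  let ?B = "diblock H x" and ?R = "snd H \<inter> (fst H - {y}) \<times> (fst H - {y})"
  define y' where "y' = last (filter (\<lambda>u. u \<in> ?B) r)"
  assume "last (filter (\<lambda>u. u \<in> ?B) r) \<noteq> y"
  then have "y \<noteq> y'" unfolding y'_def by simp
  obtain r1 r2 where r12: "r = r1 @ y' # r2" "y' \<in> ?B" "\<forall>u\<in>set r2. u \<notin> ?B"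
    using filter_last_split[OF path_from_to_meets_diblock[OF r] y'_def[symmetric]] by metis
  obtain P where P: "path_from_to H x y' P" "y \<notin> set P"
    using diblock_path_avoiding[OF r12(2) y(2) \<open>y \<noteq> y'\<close> H] by metis
  have "set P \<subseteq> fst H - {y}" using P path_from_to_subset[OF P(1)] by blast
  with P(1) have "(x, y') \<in> ?R\<^sup>*" by (rule path_from_to_rtrancl)
  moreover have "(y', w) \<in> ?R\<^sup>*"
  proof (rule path_from_to_rtrancl)
    show "path_from_to H y' w (y' # r2)" using path_from_to_split(2) r r12(1) by metis
    show "set (y' # r2) \<subseteq> fst H - {y}"
      using path_from_to_subset[OF r] r12 y(1) \<open>y \<noteq> y'\<close> by auto
  qed
  ultimately have "(x, v) \<in> ?R\<^sup>*" using wv by (meson rtrancl_trans)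
  then show False using Xset_separated[OF H y(2)[symmetric] v] by blast
qed

lemma Xset_path_suffix:
  assumes H: "snd H \<subseteq> fst H \<times> fst H" "x \<in> fst H" and bn: "bottleneck H x y"
    and b: "path_from_to H x v b" and v: "v \<in> Xset H x y"
  obtains b1 b2 where "b = b1 @ y # b2" "set b2 \<subseteq> Xset H x y"
proof -
  let ?B = "diblock H x"
  have y: "y \<in> ?B" "y \<noteq> x" using bn unfolding bottleneck_def by auto
  have "last (filter (\<lambda>w. w \<in> ?B) b) = y" using v b unfolding Xset_def by blast
  then obtain b1 b2 where b12: "b = b1 @ y # b2" "\<forall>w\<in>set b2. w \<notin> ?B"
    using filter_last_split[OF path_from_to_meets_diblock[OF b]] by metis
  have b2: "set b2 \<subseteq> fst H - {y}"
    using b12 path_from_to_subset[OF b] y(1) by auto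
  have "w \<in> Xset H x y" if w: "w \<in> set b2" for w
  proof -
    obtain c1 c2 where "b2 = c1 @ w # c2" using split_list[OF w] by blast
    then have "b = (b1 @ y # c1) @ w # c2" "set (w # c2) \<subseteq> set b2" using b12(1) by auto
    then have pre: "path_from_to H x w ((b1 @ y # c1) @ [w])"
      and suf: "path_from_to H w v (w # c2)" "set (w # c2) \<subseteq> fst H - {y}"
      using path_from_to_split[of H x v "b1 @ y # c1" w c2] b b2 by auto
    from suf have "(w, v) \<in> (snd H \<inter> (fst H - {y}) \<times> (fst H - {y}))\<^sup>*"
      by (rule path_from_to_rtrancl)
    then have "\<forall>r. path_from_to H x w r \<longrightarrow> last (filter (\<lambda>u. u \<in> ?B) r) = y"
      using last_diblock_vertex_before_Xset[OF H y v] by blast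
    moreover have "w \<in> fst H" "w \<notin> ?B" using b2 b12(2) w by auto
    ultimately show ?thesis using pre unfolding Xset_def by blast
  qed
  then show thesis using that b12(1) by blast
qed

lemma cd_node_path_suffix:
  assumes D: "digraph D" and s: "s \<in> fst D" and node: "cd_node D s y Hy"
  shows "\<forall>v p. v \<in> fst Hy \<longrightarrow> path_from_to D s v p \<longrightarrow>
           (\<exists>a b. p = a @ y # b \<and> set (y # b) \<subseteq> fst Hy)"
  using node
proof (induction rule: cd_node.induct)
  case root
  show ?case
  proof (intro allI impI)
    fix v p assume "path_from_to D s v p"
    then have "p = [] @ s # tl p" "set p \<subseteq> fst D"
      unfolding path_from_to_def is_path_def by (auto simp: neq_Nil_conv)
    then show "\<exists>a b. p = a @ s # b \<and> set (s # b) \<subseteq> fst D" by (metis append_Nil)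
  qed
next
  case (child x Hx y)
  let ?X = "Xset Hx x y"
  have Hx: "fst Hx \<subseteq> fst D" "snd Hx = snd D \<inter> fst Hx \<times> fst Hx" "x \<in> fst Hx"
    using cd_node_induced[OF D s child.hyps(1)] by auto
  then have arcs: "snd Hx \<subseteq> fst Hx \<times> fst Hx" by blast
  show ?case
  proof (intro allI impI)
    fix v p assume v: "v \<in> fst (induced Hx (?X \<union> {y}))" and p: "path_from_to D s v p"
    have "y \<in> diblock Hx x" using child.hyps(2) unfolding bottleneck_def by blast
    then have "y \<in> fst Hx" using diblock_subset[OF arcs Hx(3)] by blast
    moreover have "?X \<subseteq> fst Hx" unfolding Xset_def by blast
    ultimately have "v \<in> fst Hx" using v unfolding induced_def by auto
    then obtain a b where ab: "p = a @ x # b" "set (x # b) \<subseteq> fst Hx"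
      using child.IH p by blast
    show "\<exists>a b. p = a @ y # b \<and> set (y # b) \<subseteq> fst (induced Hx (?X \<union> {y}))"
    proof (cases "v = y")
      case True
      then have "p = butlast p @ [y]"
        using p unfolding path_from_to_def is_path_def by (metis append_butlast_last_id)
      then show ?thesis by (intro exI[of _ "butlast p"] exI[of _ "[]"]) (simp add: induced_def)
    next
      case False
      then have "v \<in> ?X" using v unfolding induced_def by simp
      have "path_from_to D x v (x # b)" using path_from_to_split(2) p ab(1) by metis
      moreover have "snd D \<inter> set (x # b) \<times> set (x # b) \<subseteq> snd Hx"
        using ab(2) unfolding Hx(2) by blast
      ultimately have "path_from_to Hx x v (x # b)" using path_from_to_mono ab(2) by metis
      then obtain b1 b2 where "x # b = b1 @ y # b2" "set b2 \<subseteq> ?X"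
        using Xset_path_suffix[OF arcs Hx(3) child.hyps(2) _ \<open>v \<in> ?X\<close>] by metis
      then have "p = (a @ b1) @ y # b2" "set (y # b2) \<subseteq> fst (induced Hx (?X \<union> {y}))"
        using ab(1) unfolding induced_def by auto
      then show ?thesis by blast
    qed
  qed
qed

lemma cd_node_dominates:
  assumes "digraph D" "s \<in> fst D" "cd_node D s y Hy" "v \<in> fst Hy" "path_from_to D s v p"
  shows "y \<in> set p"
  using cd_node_path_suffix[OF assms(1-3)] assms(4,5) by fastforce

lemma path_avoids_Xset:
  assumes bn: "bottleneck H x y" and c: "path_from_to H x y c"
  shows "set c \<inter> Xset H x y = {}"
proof (rule ccontr)
  assume "set c \<inter> Xset H x y \<noteq> {}"
  then obtain w c1 c2 where w: "w \<in> Xset H x y" and c12: "c = c1 @ w # c2"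
    by (metis disjoint_iff split_list)
  have "y \<in> set (c1 @ [w])"
    using Xset_path_through[OF w] path_from_to_split(1) c c12 by metis
  moreover have "w \<noteq> y" using w bn unfolding Xset_def bottleneck_def by blast
  ultimately have "y \<in> set c1" by simp
  moreover have "y \<in> set (w # c2)"
    using c c12 unfolding path_from_to_def by (metis last_appendR last_in_set list.distinct(1))
  moreover have "distinct c" using c unfolding path_from_to_def is_path_def by simp
  ultimately show False using c12 by auto
qed

lemma cd_child_dominates:
  assumes D: "digraph D" and s: "s \<in> fst D" and child: "cd_child D s x z"
    and p: "path_from_to D s z p"
  shows "x \<in> set p"
proof -
  obtain Hx where node: "cd_node D s x Hx" and bn: "bottleneck Hx x z"
    using child unfolding cd_child_def by blast
  have "snd Hx \<subseteq> fst Hx \<times> fst Hx" "x \<in> fst Hx"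
    using cd_node_induced[OF D s node] by auto
  then have "diblock Hx x \<subseteq> fst Hx" by (rule diblock_subset)
  moreover have "z \<in> diblock Hx x" using bn unfolding bottleneck_def by blast
  ultimately show ?thesis using cd_node_dominates[OF D s node _ p] by blast
qed

lemma cd_degenerate_child_arc:
  assumes D: "digraph D" and s: "s \<in> fst D" and child: "cd_child D s x z"
    and two: "card (cd_bag D s x) = 2"
  shows "(x, z) \<in> snd D"
proof (rule ccontr)
  assume no_arc: "(x, z) \<notin> snd D"
  obtain Hx where node: "cd_node D s x Hx" and bn: "bottleneck Hx x z"
    using child unfolding cd_child_def by blast
  have sub: "snd Hx \<subseteq> snd D" using cd_node_induced(2)[OF D s node] by blast
  have z: "z \<in> diblock Hx x" "z \<noteq> x" using bn unfolding bottleneck_def by auto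
  with no_arc sub have "bireachable Hx x z" unfolding diblock_def by blast
  then obtain P where P: "path_from_to Hx x z P" unfolding bireachable_def by blast
  then have "P \<noteq> []" "hd P = x" "last P = z" "distinct P"
    unfolding path_from_to_def is_path_def by auto
  with z(2) have "Suc 0 < length P" "P ! 0 = x"
    by (metis Suc_lessI hd_conv_nth last_conv_nth length_greater_0_conv diff_Suc_1)+
  moreover define w where "w = P ! 1"
  ultimately have xw: "(x, w) \<in> snd Hx" "w \<noteq> x"
    using P \<open>distinct P\<close> nth_eq_iff_index_eq unfolding path_from_to_def is_path_def by fastforce+
  then have "w \<noteq> z" using no_arc sub by blast
  have "{x, z, w} \<subseteq> diblock Hx x" using z(1) xw(1) unfolding diblock_def by blast
  also have "\<dots> \<subseteq> cd_bag D s x" unfolding cd_bag_def using node by blast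
  finally have "card {x, z, w} \<le> 2"
    using two card_mono by (metis card.infinite zero_neq_numeral)
  moreover have "card {x, z, w} = 3" using z(2) xw(2) \<open>w \<noteq> z\<close> by auto
  ultimately show False by simp
qed

lemma cd_child_chain_dominated:
  assumes D: "digraph D" and s: "s \<in> fst D"
    and chain: "\<forall>i. Suc i < length xs \<longrightarrow> cd_child D s (xs ! i) (xs ! Suc i)"
    and "i < length xs" and "path_from_to D s (xs ! i) p"
  shows "xs ! 0 \<in> set p"
  using assms(4,5)
proof (induction i arbitrary: p)
  case 0
  then show ?case using path_from_to_last_in by metis
next
  case (Suc i)
  then have "xs ! i \<in> set p" using cd_child_dominates[OF D s] chain by blast
  then obtain q where "path_from_to D s (xs ! i) q" "set q \<subseteq> set p"
    using path_from_to_prefix Suc.prems(2) by metis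
  then show ?case using Suc.IH Suc.prems(1) by auto
qed

section \<open>Light routes through the cut decomposition\<close>

(* The vertices of Hd on the two paths lie outside the subgraph of y, so taking the lighter path
   keeps twice the vertices of Hd collected so far below those left outside. *)
lemma cd_child_light_route:
  assumes D: "digraph D" and s: "s \<in> fst D" and node: "cd_node D s x Hx"
    and bn: "bottleneck Hx x y" and fin: "finite Hd" and xy: "x \<notin> Hd" "y \<notin> Hd"
    and W0: "s \<in> W0" "x \<in> W0" "W0 \<inter> fst Hx \<subseteq> {x}" "reaches_within D s W0"
      "2 * card (Hd \<inter> W0) \<le> card (Hd - fst Hx)"
  obtains W where "s \<in> W" "y \<in> W" "W \<inter> (Xset Hx x y \<union> {y}) \<subseteq> {y}" "reaches_within D s W"
    "2 * card (Hd \<inter> W) \<le> card (Hd - (Xset Hx x y \<union> {y}))"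
proof -
  let ?X = "Xset Hx x y" and ?I = "\<lambda>c. Hd \<inter> (set c - {x, y})"
  have Hx: "fst Hx \<subseteq> fst D" "snd Hx \<subseteq> snd D" "snd Hx \<subseteq> fst Hx \<times> fst Hx" "x \<in> fst Hx"
    using cd_node_induced[OF D s node] by auto
  have yB: "y \<in> diblock Hx x" "y \<noteq> x" using bn unfolding bottleneck_def by auto
  have X: "?X \<subseteq> fst Hx" "x \<notin> ?X" "y \<notin> ?X"
    using yB(1) unfolding Xset_def diblock_def by auto
  obtain P Q where P: "path_from_to Hx x y P" and Q: "path_from_to Hx x y Q"
    and PQ: "(set P - {x, y}) \<inter> (set Q - {x, y}) = {}"
    by (rule diblock_disjoint_paths[OF yB Hx(3)])
  obtain c where c: "path_from_to Hx x y c" "set c \<inter> ?X = {}"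
    "2 * card (?I c) \<le> card (?I P) + card (?I Q)"
  proof (cases "card (?I P) \<le> card (?I Q)")
    case True
    then show thesis using that[OF P path_avoids_Xset[OF bn P]] by simp
  next
    case False
    then show thesis using that[OF Q path_avoids_Xset[OF bn Q]] by simp
  qed
  define W where "W = W0 \<union> set c"
  have "path_from_to D x y c"
    using c(1) Hx(1,2) path_from_to_subset[OF c(1)] by (auto intro: path_from_to_mono)
  then have "reaches_within D s W"
    unfolding W_def by (rule reaches_within_Un[OF W0(4) path_reaches_within W0(2)])
  moreover have "s \<in> W" "y \<in> W" unfolding W_def using W0(1) path_from_to_last_in[OF c(1)] by auto
  moreover have "W \<inter> (?X \<union> {y}) \<subseteq> {y}" unfolding W_def using W0(3) X c(2) by auto
  moreover have "2 * card (Hd \<inter> W) \<le> card (Hd - (?X \<union> {y}))"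
  proof -
    have "Hd \<inter> W \<subseteq> (Hd \<inter> W0) \<union> ?I c" using xy unfolding W_def by blast
    then have "card (Hd \<inter> W) \<le> card (Hd \<inter> W0) + card (?I c)"
      by (meson card_Un_le card_mono fin finite_Int finite_Un le_trans)
    then have "2 * card (Hd \<inter> W) \<le> card (Hd - fst Hx) + card (?I P) + card (?I Q)"
      using W0(5) c(3) by linarith
    also have "\<dots> = card ((Hd - fst Hx) \<union> ?I P \<union> ?I Q)"
      using fin PQ path_from_to_subset[OF P] path_from_to_subset[OF Q]
      by (subst card_Un_disjoint, auto)+
    also have "\<dots> \<le> card (Hd - (?X \<union> {y}))"
      using fin xy(2) X(1) path_avoids_Xset[OF bn P] path_avoids_Xset[OF bn Q]
      by (intro card_mono) auto
    finally show ?thesis .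
  qed
  ultimately show thesis using that by blast
qed

lemma cd_node_light_route:
  assumes D: "digraph D" and s: "s \<in> fst D" and node: "cd_node D s y Hy" and fin: "finite Hd"
    and avoid: "\<forall>u\<in>Hd. \<exists>p. path_from_to D s y p \<and> u \<notin> set p"
  shows "\<exists>W. s \<in> W \<and> y \<in> W \<and> W \<inter> fst Hy \<subseteq> {y} \<and> reaches_within D s W \<and>
           2 * card (Hd \<inter> W) \<le> card (Hd - fst Hy)"
  using node avoid
proof (induction rule: cd_node.induct)
  case root
  then have "s \<notin> Hd" using path_from_to_hd_in by metis
  moreover have "reaches_within D s {s}" unfolding reaches_within_def by simp
  ultimately show ?case by (intro exI[of _ "{s}"]) auto
next
  case (child x Hx y)
  have dominated: "x \<in> set p" if "path_from_to D s y p" for p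
    using cd_child_dominates[OF D s _ that] child.hyps unfolding cd_child_def by blast
  have "\<forall>u\<in>Hd. \<exists>p. path_from_to D s x p \<and> u \<notin> set p"
  proof
    fix u assume "u \<in> Hd"
    then obtain p where p: "path_from_to D s y p" "u \<notin> set p" using child.prems by blast
    then obtain q where "path_from_to D s x q" "set q \<subseteq> set p"
      using path_from_to_prefix dominated by metis
    then show "\<exists>p. path_from_to D s x p \<and> u \<notin> set p" using p(2) by blast
  qed
  then obtain W0 where "s \<in> W0" "x \<in> W0" "W0 \<inter> fst Hx \<subseteq> {x}" "reaches_within D s W0"
    "2 * card (Hd \<inter> W0) \<le> card (Hd - fst Hx)"
    using child.IH by blast
  moreover have "x \<notin> Hd" "y \<notin> Hd"
    using child.prems dominated path_from_to_last_in by metis+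
  ultimately obtain W where "s \<in> W" "y \<in> W" "W \<inter> (Xset Hx x y \<union> {y}) \<subseteq> {y}"
    "reaches_within D s W" "2 * card (Hd \<inter> W) \<le> card (Hd - (Xset Hx x y \<union> {y}))"
    using cd_child_light_route[OF D s child.hyps fin] by metis
  then show ?case unfolding induced_def by auto
qed

section \<open>Arcs leaving a degenerate path\<close>

lemma Rt_arc_path_avoiding_head:
  assumes D: "digraph D" and s: "s \<in> fst D" and red: "reduced D s t"
    and chain: "\<forall>i. Suc i < length xs \<longrightarrow> cd_child D s (xs ! i) (xs ! Suc i)"
    and xu: "(x, u) \<in> Rt D t" "x \<in> set xs"
  obtains p where "path_from_to D s (hd xs) p" "u \<notin> set p"
proof -
  obtain T where "out_branching D s T" "(x, u) \<in> T"
    using red xu(1) unfolding reduced_def Rt_def by blast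
  then obtain q where q: "path_from_to D s x q" "u \<notin> set q"
    using out_branching_path_avoiding_child[OF D] by metis
  obtain i where "i < length xs" "x = xs ! i" using xu(2) by (metis in_set_conv_nth)
  then have "hd xs \<in> set q"
    using cd_child_chain_dominated[OF D s chain] q(1) xu(2) by (metis hd_conv_nth list.size(3) not_less0)
  then obtain p where "path_from_to D s (hd xs) p" "set p \<subseteq> set q"
    using path_from_to_prefix q(1) by metis
  then show thesis using that q(2) by blast
qed

lemma degenerate_path_reaches_within:
  assumes D: "digraph D" and s: "s \<in> fst D" and deg: "degenerate_path D s xs"
  shows "reaches_within D (hd xs) (set xs)"
proof -
  have xs: "xs \<noteq> []" "\<forall>x\<in>set xs. cd_degenerate D s x"
    and chain: "\<forall>i. Suc i < length xs \<longrightarrow> cd_child D s (xs ! i) (xs ! Suc i)"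
    using deg unfolding degenerate_path_def by auto
  have "\<forall>i. Suc i < length xs \<longrightarrow> (xs ! i, xs ! Suc i) \<in> snd D"
  proof (intro allI impI)
    fix i assume i: "Suc i < length xs"
    then have "card (cd_bag D s (xs ! i)) = 2" using xs(2) unfolding cd_degenerate_def by simp
    moreover have "cd_child D s (xs ! i) (xs ! Suc i)" using i chain by blast
    ultimately show "(xs ! i, xs ! Suc i) \<in> snd D" using cd_degenerate_child_arc[OF D s] by simp
  qed
  then show ?thesis by (rule arc_chain_reaches_within[OF xs(1)])
qed

lemma degenerate_path_light_set:
  assumes D: "digraph D" and red: "reduced D s t" and deg: "degenerate_path D s xs"
    and F: "finite F" "F \<subseteq> Rt D t" "\<forall>(x, u)\<in>F. x \<in> set xs"
  obtains W where "s \<in> W" "hd xs \<in> W" "reaches_within D s W"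
    "2 * card (snd ` F \<inter> W) \<le> card (snd ` F)"
proof -
  have s: "s \<in> fst D" using reduced_root_reaches[OF D red] by blast
  have "hd xs \<in> set xs" "\<forall>x\<in>set xs. cd_degenerate D s x"
    and chain: "\<forall>i. Suc i < length xs \<longrightarrow> cd_child D s (xs ! i) (xs ! Suc i)"
    using deg unfolding degenerate_path_def by auto
  then obtain H0 where H0: "cd_node D s (hd xs) H0"
    unfolding cd_degenerate_def cd_child_def by blast
  have "\<forall>u\<in>snd ` F. \<exists>p. path_from_to D s (hd xs) p \<and> u \<notin> set p"
  proof
    fix u assume "u \<in> snd ` F"
    then obtain x where "(x, u) \<in> F" by force
    then have "(x, u) \<in> Rt D t" "x \<in> set xs" using F(2,3) by auto
    then obtain p where "path_from_to D s (hd xs) p" "u \<notin> set p"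
      by (rule Rt_arc_path_avoiding_head[OF D s red chain])
    then show "\<exists>p. path_from_to D s (hd xs) p \<and> u \<notin> set p" by blast
  qed
  with D s H0 finite_imageI[OF F(1)] have "\<exists>W. s \<in> W \<and> hd xs \<in> W \<and> W \<inter> fst H0 \<subseteq> {hd xs} \<and>
      reaches_within D s W \<and> 2 * card (snd ` F \<inter> W) \<le> card (snd ` F - fst H0)"
    by (rule cd_node_light_route)
  then obtain W where "s \<in> W" "hd xs \<in> W" "reaches_within D s W"
    "2 * card (snd ` F \<inter> W) \<le> card (snd ` F - fst H0)" by blast
  moreover have "card (snd ` F - fst H0) \<le> card (snd ` F)" using F(1) by (intro card_mono) auto
  ultimately show thesis using that by simp
qed

lemma card_le_twice_heads_outside:
  assumes "finite F" "inj_on snd F" "2 * card (snd ` F \<inter> U) \<le> card (snd ` F)"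
  shows "card F \<le> 2 * card {f \<in> F. snd f \<notin> U}"
proof -
  have "inj_on snd {f \<in> F. snd f \<notin> U}" using assms(2) by (rule inj_on_subset) blast
  then have "card {f \<in> F. snd f \<notin> U} = card (snd ` {f \<in> F. snd f \<notin> U})" by (simp add: card_image)
  also have "snd ` {f \<in> F. snd f \<notin> U} = snd ` F - U" by auto
  finally have "card {f \<in> F. snd f \<notin> U} = card (snd ` F - U)" .
  moreover have "card (snd ` F) = card (snd ` F \<inter> U) + card (snd ` F - U)"
    using assms(1) by (intro card_Int_Diff) simp
  moreover have "card (snd ` F) = card F" using assms(2) by (rule card_image)
  ultimately show ?thesis using assms(3) by linarith
qed

lemma positive_instance_if_Rt_arcs_leave:
  assumes D: "digraph D" and red: "reduced D s t" and U: "s \<in> U" "reaches_within D s U"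
    and S: "S \<subseteq> Rt D t" "\<forall>(a, b)\<in>S. a \<in> U \<and> b \<notin> U" "inj_on snd S" and k: "k \<le> int (card S)"
  shows "positive_instance D s t k"
proof -
  have "S \<subseteq> snd D" using S(1) unfolding Rt_def by blast
  then obtain T where T: "out_branching D s T" "S \<subseteq> T"
    by (rule out_branching_containing_arcs[OF D U(1) reduced_root_reaches[OF D red] U(2) _ S(2,3)])
  obtain Tm where Tm: "in_branching D t Tm" using red unfolding reduced_def by blast
  have "S \<subseteq> T - Tm" using T(2) S(1) Tm unfolding Rt_def by blast
  moreover have "finite (fst D \<times> fst D)" "T \<subseteq> fst D \<times> fst D"
    using D T(1) unfolding digraph_def out_branching_def by auto
  then have "finite T" by (rule finite_subset[rotated])
  ultimately have "card S \<le> card (T - Tm)" by (intro card_mono) auto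
  then show ?thesis using k T(1) Tm unfolding positive_instance_def by fastforce
qed

(* Unlike in A+, the heads need not lie in bags of proper ancestors of x_1. *)
lemma degenerate_path_Rt_arcs_bound:
  assumes D: "digraph D" and red: "reduced D s t" and deg: "degenerate_path D s xs"
    and F: "F \<subseteq> Rt D t" "\<forall>(x, u)\<in>F. x \<in> set xs \<and> u \<notin> set xs" "inj_on snd F"
    and neg: "\<not> positive_instance D s t k"
  shows "int (card F) \<le> 2 * k + 1"
proof -
  have s: "s \<in> fst D" using reduced_root_reaches[OF D red] by blast
  have "finite (fst D \<times> fst D)" "F \<subseteq> fst D \<times> fst D"
    using D F(1) unfolding digraph_def Rt_def by auto
  then have fin: "finite F" by (rule finite_subset[rotated])
  have "\<forall>(x, u)\<in>F. x \<in> set xs" using F(2) by auto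
  then obtain W where W: "s \<in> W" "hd xs \<in> W" "reaches_within D s W"
    "2 * card (snd ` F \<inter> W) \<le> card (snd ` F)"
    by (rule degenerate_path_light_set[OF D red deg fin F(1)])
  define U where "U = W \<union> set xs"
  define S where "S = {f \<in> F. snd f \<notin> U}"
  have "snd ` F \<inter> U = snd ` F \<inter> W" using F(2) unfolding U_def by auto
  then have "card F \<le> 2 * card S"
    unfolding S_def using card_le_twice_heads_outside[OF fin F(3)] W(4) by simp
  moreover have "\<not> k \<le> int (card S)"
  proof
    assume "k \<le> int (card S)"
    have "s \<in> U" using W(1) unfolding U_def by blast
    moreover have "reaches_within D s U"
      unfolding U_def by (rule reaches_within_Un[OF W(3) degenerate_path_reaches_within[OF D s deg] W(2)])
    moreover have "S \<subseteq> Rt D t" using F(1) unfolding S_def by blast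
    moreover have "\<forall>(a, b)\<in>S. a \<in> U \<and> b \<notin> U" using F(2) unfolding U_def S_def by auto
    moreover have "inj_on snd S" using F(3) unfolding S_def by (rule inj_on_subset) blast
    ultimately have "positive_instance D s t k"
      using \<open>k \<le> int (card S)\<close> by (rule positive_instance_if_Rt_arcs_leave[OF D red])
    with neg show False ..
  qed
  ultimately show ?thesis by linarith
qed

theorem corollary3:
  fixes D :: "'a dg" and s t :: 'a and k :: int and xs :: "'a list"
  assumes "digraph D"
    and "reduced D s t"
    and "degenerate_path D s xs"
    and "\<forall>i j u. i < j \<and> j < length xs \<longrightarrow>
           \<not> ((xs ! i, u) \<in> Aplus D s xs \<inter> Rt D t \<and> (xs ! j, u) \<in> Aplus D s xs \<inter> Rt D t)"
    and "\<not> positive_instance D s t k"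
  shows "int (card (Aplus D s xs \<inter> Rt D t)) \<le> 2 * k + 1"
proof (rule degenerate_path_Rt_arcs_bound[OF assms(1-3) _ _ _ assms(5)])
  show "Aplus D s xs \<inter> Rt D t \<subseteq> Rt D t" by blast
  show "\<forall>(x, u)\<in>Aplus D s xs \<inter> Rt D t. x \<in> set xs \<and> u \<notin> set xs"
    unfolding Aplus_def by blast
  show "inj_on snd (Aplus D s xs \<inter> Rt D t)"
  proof (rule inj_onI)
    fix f g assume f: "f \<in> Aplus D s xs \<inter> Rt D t" and g: "g \<in> Aplus D s xs \<inter> Rt D t"
      and heads: "snd f = snd g"
    obtain i j where "i < length xs" "fst f = xs ! i" "j < length xs" "fst g = xs ! j"
      using f g unfolding Aplus_def by (auto simp: in_set_conv_nth)
    moreover have "\<not> i < j" "\<not> j < i"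
      using assms(4) f g heads calculation by (metis prod.collapse)+
    ultimately show "f = g" using heads by (metis linorder_neqE_nat prod.expand)
  qed
qed

end
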